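(* Let $\beta\in\mathbb R$ with $|\beta|<\frac\pi4$, let $a_0,a_1,a_2,a_3$ be given by $a_0=\frac{1+\sqrt2\cos\beta}{2\sqrt2}$, $a_1=\frac{1+\sqrt2\sin\beta}{2\sqrt2}$, $a_2=\frac{1-\sqrt2\cos\beta}{2\sqrt2}$, $a_3=\frac{1-\sqrt2\sin\beta}{2\sqrt2}$, and let $\mu_0$ be the associated measure. If $\mu_0$ is absolutely continuous with respect to Lebesgue measure on $[0,1]$, then its Radon–Nikodym derivative $f=d\mu_0/dx$ is not essentially bounded on any non-empty open subset of $[0,1]$.
   Context: $L^2(\mathbb T)$ with normalized Haar measure, $\langle f\mid g\rangle=\int\overline fg$, $e_n(z)=z^n$. $m_0(z)=a_0+a_1z+a_2z^2+a_3z^3$, $m_1(z)=z^3\overline{m_0(-z)}$, $(S_if)(z)=m_i(z)f(z^2)$ for $i=0,1$. $\mu_0$ is the Borel probability measure on $[0,1]$ determined by $\mu_0([\xi,\xi+2^{-k}))=\|S_{i_k}^*\cdots S_{i_1}^*e_0\|^2$ for every $\xi=\sum_{r=1}^ki_r2^{-r}$, $i_r\in\{0,1\}$. *)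

theory Defs
  imports "HOL-Probability.Probability"
begin

text \<open>The circle T is parametrised by t in [0,1] via t |-> exp(2 pi i t); normalized Haar
measure on T corresponds to Lebesgue measure on [0,1]. Elements of L^2(T) are represented by
Borel measurable functions complex => complex (only their values on T matter).\<close>

definition circ :: "real \<Rightarrow> complex" where
  "circ t = cis (2 * pi * t)"

definition ipT :: "(complex \<Rightarrow> complex) \<Rightarrow> (complex \<Rightarrow> complex) \<Rightarrow> complex" where
  "ipT f g = set_lebesgue_integral lborel {0..1::real} (\<lambda>t. cnj (f (circ t)) * g (circ t))"

definition l2sqT :: "(complex \<Rightarrow> complex) \<Rightarrow> ennreal" where
  "l2sqT f = (\<integral>\<^sup>+ t. ennreal ((cmod (f (circ t)))\<^sup>2) * indicator {0..1::real} t \<partial>lborel)"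

definition e0 :: "complex \<Rightarrow> complex" where
  "e0 z = 1"

definition m0 :: "(nat \<Rightarrow> complex) \<Rightarrow> complex \<Rightarrow> complex" where
  "m0 a z = a 0 + a 1 * z + a 2 * z ^ 2 + a 3 * z ^ 3"

definition m1 :: "(nat \<Rightarrow> complex) \<Rightarrow> complex \<Rightarrow> complex" where
  "m1 a z = z ^ 3 * cnj (m0 a (- z))"

definition Sop :: "(nat \<Rightarrow> complex) \<Rightarrow> bool \<Rightarrow> (complex \<Rightarrow> complex) \<Rightarrow> complex \<Rightarrow> complex" where
  "Sop a i f z = (if i then m1 a z else m0 a z) * f (z ^ 2)"

fun Sprod :: "(nat \<Rightarrow> complex) \<Rightarrow> bool list \<Rightarrow> (complex \<Rightarrow> complex) \<Rightarrow> complex \<Rightarrow> complex" where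
  "Sprod a [] h = h"
| "Sprod a (i # is) h = Sop a i (Sprod a is h)"

text \<open>Norm of S_{i_k}^* ... S_{i_1}^* e_0 = (S_{i_1} ... S_{i_k})^* e_0, computed by duality:
  the norm of T^* x equals the supremum of |<x | T h>| over h in the unit ball of L^2(T).\<close>
definition adj_norm :: "(nat \<Rightarrow> complex) \<Rightarrow> bool list \<Rightarrow> real" where
  "adj_norm a is = (SUP h \<in> {h. h \<in> borel_measurable borel \<and> l2sqT h \<le> 1}.
                       cmod (ipT e0 (Sprod a is h)))"

definition dyadic :: "bool list \<Rightarrow> real" where
  "dyadic is = (\<Sum>r<length is. (if is ! r then 1 else 0) / 2 ^ (r + 1))"

definition coeffs_beta :: "real \<Rightarrow> nat \<Rightarrow> complex" where
  "coeffs_beta \<beta> k = complex_of_real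
     (if k = 0 then (1 + sqrt 2 * cos \<beta>) / (2 * sqrt 2)
      else if k = 1 then (1 + sqrt 2 * sin \<beta>) / (2 * sqrt 2)
      else if k = 2 then (1 - sqrt 2 * cos \<beta>) / (2 * sqrt 2)
      else if k = 3 then (1 - sqrt 2 * sin \<beta>) / (2 * sqrt 2)
      else 0)"

text \<open>mu is the measure mu_0 associated with the coefficients a: a Borel probability measure
  on [0,1] (viewed as a measure on the real line concentrated on [0,1]).\<close>
definition is_mu0 :: "(nat \<Rightarrow> complex) \<Rightarrow> real measure \<Rightarrow> bool" where
  "is_mu0 a \<mu> \<longleftrightarrow> sets \<mu> = sets borel \<and> prob_space \<mu> \<and> emeasure \<mu> (- {0..1}) = 0 \<and>
     (\<forall>is. emeasure \<mu> {dyadic is ..< dyadic is + 1 / 2 ^ length is}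
             = ennreal ((adj_norm a is)\<^sup>2))"

end

theory Submission
  imports Defs "HOL-Computational_Algebra.Polynomial"
begin

text \<open>For real coefficients, \<open>S\<^sub>w e\<^sub>0\<close> restricted to the circle is a polynomial whose constant
  term is the product of the values \<open>a\<^sub>0\<close> or \<open>-a\<^sub>3\<close> read off from \<open>w\<close>. Testing the adjoint
  against \<open>e\<^sub>0\<close> therefore gives \<open>\<mu>\<^sub>0(I\<^sub>w) \<ge> |constant term|\<^sup>2\<close> for the dyadic interval \<open>I\<^sub>w\<close>.
  Appending \<open>n\<close> zeros to \<open>w\<close> keeps the left end point of \<open>I\<^sub>w\<close>, halves its length \<open>n\<close> times and
  multiplies the lower bound by \<open>a\<^sub>0\<^sup>2\<^sup>n\<close>. As \<open>2 a\<^sub>0\<^sup>2 > 1\<close> for \<open>|\<beta>| < \<pi>/4\<close>, the averages of the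
  density over these intervals, all contained in a given open set, are unbounded.\<close>

section \<open>Integrals over the circle\<close>

lemma norm_circ [simp]: "cmod (circ t) = 1"
  by (simp add: circ_def)

lemma circ_power: "circ t ^ n = circ (real n * t)"
  unfolding circ_def Complex.DeMoivre by (simp add: mult_ac)

lemma circ_add_1: "circ (1 + t) = circ t"
  by (simp add: circ_def distrib_left cis_mult[symmetric])

lemma circ_measurable [measurable]: "circ \<in> borel_measurable borel"
  unfolding circ_def by (intro borel_measurable_continuous_onI continuous_intros)

lemma integral_circ_power: "(CLBINT t:{0..1}. circ t ^ n) = (if n = 0 then 1 else 0)"
proof (cases "n = 0")
  case False
  define c where "c = complex_of_real (2 * pi * real n) * \<i>"
  have "c \<noteq> 0"
    using False by (simp add: c_def)
  then have "((\<lambda>t. exp (c * complex_of_real t) / c) has_vector_derivative exp (c * complex_of_real t))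
      (at t within {0..1})" for t
    by (intro has_vector_derivative_real_field) (auto intro!: derivative_eq_intros)
  then have "((\<lambda>t. exp (c * complex_of_real t)) has_integral
      (exp (c * complex_of_real 1) / c - exp (c * complex_of_real 0) / c)) {0..1}"
    by (intro fundamental_theorem_of_calculus) auto
  moreover have "exp (c * complex_of_real 1) = 1"
    unfolding c_def by (auto simp: exp_eq_1 intro!: exI[of _ "int n"])
  moreover have "circ t ^ n = exp (c * complex_of_real t)" for t
    unfolding circ_power by (simp add: circ_def cis_conv_exp c_def mult_ac)
  ultimately have "((\<lambda>t. circ t ^ n) has_integral 0) {0..1}"
    by simp
  moreover have "set_integrable lborel {0..1} (\<lambda>t. circ t ^ n)"
    unfolding circ_def by (intro borel_integrable_atLeastAtMost' continuous_intros)
  ultimately show ?thesis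
    using False by (simp add: set_borel_integral_eq_integral(2) integral_unique)
qed (simp add: set_integral_const)

lemma integral_poly_circ: "(CLBINT t:{0..1}. poly p (circ t)) = poly p 0"
proof -
  have "(CLBINT t:{0..1}. poly p (circ t)) = (\<Sum>i\<le>degree p. CLBINT t:{0..1}. coeff p i * circ t ^ i)"
    unfolding set_lebesgue_integral_def poly_altdef scaleR_sum_right
    by (intro Bochner_Integration.integral_sum
        borel_integrable_atLeastAtMost'[unfolded set_integrable_def])
      (unfold circ_def, intro continuous_intros)
  also have "\<dots> = coeff p 0"
    by (simp add: integral_circ_power if_distrib sum.delta cong: if_cong)
  finally show ?thesis
    by (simp add: poly_0_coeff_0)
qed

text \<open>The doubling map \<open>z \<mapsto> z\<^sup>2\<close> preserves Haar measure; one inequality suffices here.\<close>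

lemma nn_integral_circ_double_le:
  fixes G :: "complex \<Rightarrow> ennreal"
  assumes [measurable]: "G \<in> borel_measurable borel"
  shows "(\<integral>\<^sup>+t. G (circ (2 * t)) * indicator {0..1} t \<partial>lborel)
       \<le> (\<integral>\<^sup>+t. G (circ t) * indicator {0..1} t \<partial>lborel)"
    (is "?Y \<le> ?X")
proof -
  have "(\<integral>\<^sup>+s. G (circ s) * indicator {0..2} s \<partial>lborel)
      = 2 * (\<integral>\<^sup>+t. G (circ (0 + 2 * t)) * indicator {0..2} (0 + 2 * t) \<partial>lborel)"
    using nn_integral_real_affine[of "\<lambda>s. G (circ s) * indicator {0..2} s" 2 0] by simp
  also have "(\<lambda>t. G (circ (0 + 2 * t)) * indicator {0..2::real} (0 + 2 * t))
      = (\<lambda>t. G (circ (2 * t)) * indicator {0..1} t)"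
    by (auto simp: indicator_def fun_eq_iff)
  finally have double: "(\<integral>\<^sup>+s. G (circ s) * indicator {0..2} s \<partial>lborel) = 2 * ?Y" .
  have "(\<integral>\<^sup>+s. G (circ s) * indicator {1..2} s \<partial>lborel)
      = (\<integral>\<^sup>+t. G (circ (1 + 1 * t)) * indicator {1..2} (1 + 1 * t) \<partial>lborel)"
    using nn_integral_real_affine[of "\<lambda>s. G (circ s) * indicator {1..2} s" 1 1] by simp
  also have "(\<lambda>t. G (circ (1 + 1 * t)) * indicator {1..2::real} (1 + 1 * t))
      = (\<lambda>t. G (circ t) * indicator {0..1} t)"
    by (auto simp: indicator_def fun_eq_iff circ_add_1)
  finally have shift: "(\<integral>\<^sup>+s. G (circ s) * indicator {1..2} s \<partial>lborel) = ?X" .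
  have "2 * ?Y \<le> (\<integral>\<^sup>+s. G (circ s) * indicator {0..1} s + G (circ s) * indicator {1..2} s \<partial>lborel)"
    unfolding double[symmetric] by (intro nn_integral_mono) (auto simp: indicator_def)
  also have "\<dots> = 2 * ?X"
    using shift by (subst nn_integral_add) (simp_all add: mult_2)
  finally show ?thesis
    by (simp add: ennreal_mult_le_mult_iff)
qed

lemma nn_integral_circ_power2_le:
  fixes G :: "complex \<Rightarrow> ennreal"
  assumes "G \<in> borel_measurable borel"
  shows "(\<integral>\<^sup>+t. G (circ t ^ 2 ^ k) * indicator {0..1} t \<partial>lborel)
       \<le> (\<integral>\<^sup>+t. G (circ t) * indicator {0..1} t \<partial>lborel)"
  using assms
proof (induction k arbitrary: G)
  case (Suc k)
  note [measurable] = Suc.prems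
  have "(\<integral>\<^sup>+t. G (circ t ^ 2 ^ Suc k) * indicator {0..1} t \<partial>lborel)
      = (\<integral>\<^sup>+t. G ((circ t ^ 2 ^ k)\<^sup>2) * indicator {0..1} t \<partial>lborel)"
    by (simp add: power_mult[symmetric] mult.commute)
  also have "\<dots> \<le> (\<integral>\<^sup>+t. G ((circ t)\<^sup>2) * indicator {0..1} t \<partial>lborel)"
    by (rule Suc.IH) measurable
  also have "\<dots> \<le> (\<integral>\<^sup>+t. G (circ t) * indicator {0..1} t \<partial>lborel)"
    using nn_integral_circ_double_le[of G] by (simp add: circ_power)
  finally show ?case .
qed simp

section \<open>The cascade operators\<close>

lemma m1_measurable [measurable]: "m1 a \<in> borel_measurable borel"
  unfolding m1_def m0_def by (intro borel_measurable_continuous_onI continuous_intros)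

lemma Sprod_measurable [measurable]:
  "h \<in> borel_measurable borel \<Longrightarrow> Sprod a w h \<in> borel_measurable borel"
proof (induction w)
  case (Cons i w)
  note [measurable] = Cons.IH[OF Cons.prems]
  show ?case
    unfolding Sprod.simps Sop_def[abs_def] m0_def by measurable
qed simp

lemma Sprod_eq_Sprod_e0_mult: "Sprod a w h z = Sprod a w e0 z * h (z ^ 2 ^ length w)"
  by (induction w arbitrary: z) (simp_all add: e0_def Sop_def power_mult[symmetric] mult_ac)

definition mask_bound :: "(nat \<Rightarrow> complex) \<Rightarrow> real" where
  "mask_bound a = (\<Sum>k\<le>3. cmod (a k))"

lemma mask_bound_nonneg [simp]: "0 \<le> mask_bound a"
  by (simp add: mask_bound_def sum_nonneg)

lemma norm_m0_le: "cmod z = 1 \<Longrightarrow> cmod (m0 a z) \<le> mask_bound a"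
proof -
  assume "cmod z = 1"
  then have "cmod (m0 a z) = cmod (\<Sum>k\<le>3. a k * z ^ k)"
    by (simp add: m0_def numeral_3_eq_3 numeral_2_eq_2 add_ac)
  also have "\<dots> \<le> (\<Sum>k\<le>3. cmod (a k * z ^ k))"
    by (rule norm_sum)
  finally show ?thesis
    using \<open>cmod z = 1\<close> by (simp add: mask_bound_def norm_mult norm_power)
qed

lemma norm_Sprod_e0_le: "cmod z = 1 \<Longrightarrow> cmod (Sprod a w e0 z) \<le> mask_bound a ^ length w"
proof (induction w arbitrary: z)
  case (Cons i w)
  have "cmod (if i then m1 a z else m0 a z) \<le> mask_bound a"
    using norm_m0_le[of z a] norm_m0_le[of "- z" a] Cons.prems
    by (simp add: m1_def norm_mult norm_power)
  moreover have "cmod (Sprod a w e0 (z\<^sup>2)) \<le> mask_bound a ^ length w"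
    using Cons by (simp add: norm_power)
  ultimately show ?case
    by (cases i) (auto simp: Sop_def norm_mult intro!: mult_mono)
qed (simp add: e0_def)

lemma norm_le_one_plus_square: "x \<le> 1 + x\<^sup>2" for x :: real
  using sum_power2_ge_zero[of "x - 1/2" 0] by (simp add: power2_eq_square algebra_simps)

lemma ennreal_norm_indicator_mult_le:
  fixes s u :: "'a :: real_normed_div_algebra"
  assumes "norm s \<le> B"
  shows "ennreal (norm (indicator A t *\<^sub>R (s * u)))
    \<le> ennreal B * (indicator A t + ennreal ((norm u)\<^sup>2) * indicator A t)"
proof (cases "t \<in> A")
  case True
  have "0 \<le> B"
    using assms norm_ge_zero order_trans by blast
  have "norm (s * u) \<le> B * (1 + (norm u)\<^sup>2)"
    unfolding norm_mult using assms \<open>0 \<le> B\<close> norm_le_one_plus_square[of "norm u"]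
    by (intro mult_mono) simp_all
  then have "ennreal (norm (s * u)) \<le> ennreal (B * (1 + (norm u)\<^sup>2))"
    by (rule ennreal_leI)
  also have "\<dots> = ennreal B * (1 + ennreal ((norm u)\<^sup>2))"
    using \<open>0 \<le> B\<close> by (simp add: ennreal_mult)
  finally show ?thesis
    using True by simp
qed simp

lemma norm_ipT_e0_Sprod_le:
  assumes [measurable]: "h \<in> borel_measurable borel" and "l2sqT h \<le> 1"
  shows "cmod (ipT e0 (Sprod a w h)) \<le> 2 * mask_bound a ^ length w"
proof -
  define B where "B = mask_bound a ^ length w"
  define g where "g t = cmod (h (circ t ^ 2 ^ length w))" for t
  define f where "f t = indicator {0..1} t *\<^sub>R (Sprod a w e0 (circ t) * h (circ t ^ 2 ^ length w))"
    for t
  have B: "0 \<le> B"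
    by (simp add: B_def)
  have ip: "ipT e0 (Sprod a w h) = integral\<^sup>L lborel f"
    unfolding ipT_def set_lebesgue_integral_def f_def
    by (simp add: e0_def Sprod_eq_Sprod_e0_mult[of a w h])
  have pointwise: "ennreal (norm (f t))
      \<le> ennreal B * (indicator {0..1} t + ennreal ((g t)\<^sup>2) * indicator {0..1} t)" for t
    unfolding f_def g_def B_def
    by (rule ennreal_norm_indicator_mult_le[OF norm_Sprod_e0_le[OF norm_circ]])
  have [measurable]: "g \<in> borel_measurable borel"
    unfolding g_def by measurable
  have "(\<integral>\<^sup>+t. ennreal ((g t)\<^sup>2) * indicator {0..1} t \<partial>lborel) \<le> l2sqT h"
    unfolding l2sqT_def g_def
    by (rule nn_integral_circ_power2_le[where G = "\<lambda>z. ennreal ((cmod (h z))\<^sup>2)"]) measurable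
  then have L2: "(\<integral>\<^sup>+t. ennreal ((g t)\<^sup>2) * indicator {0..1} t \<partial>lborel) \<le> 1"
    using \<open>l2sqT h \<le> 1\<close> by simp
  have "(\<integral>\<^sup>+t. ennreal (norm (f t)) \<partial>lborel)
      \<le> (\<integral>\<^sup>+t. ennreal B * (indicator {0..1} t + ennreal ((g t)\<^sup>2) * indicator {0..1} t) \<partial>lborel)"
    by (intro nn_integral_mono pointwise)
  also have "\<dots> = ennreal B * ((\<integral>\<^sup>+t. indicator {0..1::real} t \<partial>lborel)
      + (\<integral>\<^sup>+t. ennreal ((g t)\<^sup>2) * indicator {0..1} t \<partial>lborel))"
    by (subst nn_integral_add[symmetric]) (measurable, rule nn_integral_cmult, measurable)
  also have "\<dots> \<le> ennreal B * (1 + 1)"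
    using L2 by (intro mult_left_mono add_mono) simp_all
  finally have "ennreal (cmod (integral\<^sup>L lborel f)) \<le> ennreal (2 * B)"
    using integral_norm_bound_ennreal[of lborel f] B
    by (cases "integrable lborel f")
      (auto simp: not_integrable_integral_eq ennreal_mult' mult.commute intro: order_trans)
  then show ?thesis
    using B by (simp add: ip B_def)
qed

section \<open>The constant term of \<open>S\<^sub>w e\<^sub>0\<close>\<close>

text \<open>For real coefficients and \<open>|z| = 1\<close> one has \<open>cnj z = 1/z\<close>, so \<open>m\<^sub>1\<close> agrees on the circle with
  the polynomial \<open>-a\<^sub>3 + a\<^sub>2 z - a\<^sub>1 z\<^sup>2 + a\<^sub>0 z\<^sup>3\<close>.\<close>

definition mask_poly :: "(nat \<Rightarrow> complex) \<Rightarrow> bool \<Rightarrow> complex poly" where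
  "mask_poly a i = (if i then [:- a 3, a 2, - a 1, a 0:] else [:a 0, a 1, a 2, a 3:])"

fun cascade_poly :: "(nat \<Rightarrow> complex) \<Rightarrow> bool list \<Rightarrow> complex poly" where
  "cascade_poly a [] = 1"
| "cascade_poly a (i # w) = mask_poly a i * pcompose (cascade_poly a w) [:0, 0, 1:]"

lemma mask_eq_poly_mask_poly:
  assumes real: "\<And>k. cnj (a k) = a k" and "cmod z = 1"
  shows "(if i then m1 a z else m0 a z) = poly (mask_poly a i) z"
proof -
  have "z \<noteq> 0"
    using assms(2) by auto
  moreover have cnj_z: "cnj z = inverse z"
    using assms(2) complex_norm_square[of z] \<open>z \<noteq> 0\<close> by (simp add: field_simps)
  ultimately show ?thesis
    unfolding m1_def m0_def mask_poly_def
    by (auto simp: real cnj_z field_simps power2_eq_square power3_eq_cube)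
qed

lemma Sprod_e0_eq_poly_cascade_poly:
  assumes "\<And>k. cnj (a k) = a k"
  shows "cmod z = 1 \<Longrightarrow> Sprod a w e0 z = poly (cascade_poly a w) z"
proof (induction w arbitrary: z)
  case (Cons i w)
  then show ?case
    using mask_eq_poly_mask_poly[OF assms Cons.prems, of i]
    by (simp add: Sop_def poly_pcompose power2_eq_square norm_mult)
qed (simp add: e0_def)

lemma poly_cascade_poly_0:
  "poly (cascade_poly a w) 0 = (\<Prod>i\<leftarrow>w. if i then - a 3 else a 0)"
  by (induction w) (simp_all add: poly_pcompose mask_poly_def)

lemma norm_poly_cascade_poly_0_le_adj_norm:
  assumes "\<And>k. cnj (a k) = a k"
  shows "cmod (poly (cascade_poly a w) 0) \<le> adj_norm a w"
proof -
  define ball where "ball = {h. h \<in> borel_measurable borel \<and> l2sqT h \<le> 1}"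
  have "e0 \<in> ball"
    by (simp add: ball_def l2sqT_def e0_def[abs_def] ennreal_indicator)
  \<comment> \<open>needed because \<open>adj_norm\<close> is a supremum of reals\<close>
  moreover have "bdd_above ((\<lambda>h. cmod (ipT e0 (Sprod a w h))) ` ball)"
    by (rule bdd_aboveI2[where M = "2 * mask_bound a ^ length w"])
      (auto simp: ball_def intro: norm_ipT_e0_Sprod_le)
  ultimately have "cmod (ipT e0 (Sprod a w e0)) \<le> adj_norm a w"
    unfolding adj_norm_def ball_def[symmetric] by (rule cSUP_upper)
  moreover have "ipT e0 (Sprod a w e0) = (CLBINT t:{0..1}. poly (cascade_poly a w) (circ t))"
    unfolding ipT_def
    by (rule set_lebesgue_integral_cong) (auto simp: e0_def Sprod_e0_eq_poly_cascade_poly[OF assms])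
  ultimately show ?thesis
    by (simp add: integral_poly_circ)
qed

section \<open>Dyadic intervals\<close>

fun bits :: "nat \<Rightarrow> nat \<Rightarrow> bool list" where
  "bits 0 m = []"
| "bits (Suc k) m = bits k (m div 2) @ [odd m]"

lemma length_bits [simp]: "length (bits k m) = k"
  by (induction k arbitrary: m) auto

lemma dyadic_snoc: "dyadic (w @ [b]) = dyadic w + (if b then 1 else 0) / 2 ^ (length w + 1)"
  unfolding dyadic_def by (simp add: nth_append)

lemma dyadic_bits: "m < 2 ^ k \<Longrightarrow> dyadic (bits k m) = real m / 2 ^ k"
proof (induction k arbitrary: m)
  case (Suc k)
  have "real m = 2 * real (m div 2) + real (m mod 2)"
    by (metis mult_div_mod_eq of_nat_add of_nat_mult of_nat_numeral)
  also have "real (m mod 2) = (if odd m then 1 else 0)"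
    by (simp add: odd_iff_mod_2_eq_one)
  finally have "real m = 2 * real (m div 2) + (if odd m then 1 else 0)" .
  then show ?case
    using Suc.IH[of "m div 2"] Suc.prems by (simp add: dyadic_snoc field_simps)
qed (simp add: dyadic_def)

lemma dyadic_append_replicate_False: "dyadic (w @ replicate n False) = dyadic w"
  by (induction n) (simp_all add: dyadic_snoc flip: replicate_append_same append_assoc)

lemma openin_obtains_dyadic_interval:
  assumes "openin (top_of_set {0..1}) U" "U \<noteq> {}"
  obtains w where "{dyadic w ..< dyadic w + 1 / 2 ^ length w} \<subseteq> U"
proof -
  obtain x where "x \<in> U"
    using assms(2) by blast
  with assms(1) obtain e where "e > 0" and e: "\<And>y. y \<in> {0..1} \<Longrightarrow> dist y x < e \<Longrightarrow> y \<in> U"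
    and x: "0 \<le> x" "x \<le> 1"
    unfolding openin_euclidean_subtopology_iff by (metis atLeastAtMost_iff subsetD)
  obtain k where "1 / 2 ^ k < e"
    using real_arch_pow_inv[OF \<open>e > 0\<close>, of "1/2"] by (auto simp: power_one_over)
  \<comment> \<open>the cell \<open>[m/2\<^sup>k, (m+1)/2\<^sup>k)\<close> containing \<open>x\<close>, with \<open>x = 1\<close> assigned to the last cell\<close>
  define m where "m = min (nat \<lfloor>x * 2 ^ k\<rfloor>) (2 ^ k - 1)"
  define \<xi> where "\<xi> = real m / 2 ^ k"
  have "m < 2 ^ k"
    by (simp add: m_def min_less_iff_disj)
  have "real m \<le> real (nat \<lfloor>x * 2 ^ k\<rfloor>)"
    by (simp add: m_def)
  also have "\<dots> \<le> x * 2 ^ k"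
    using x by simp
  finally have "real m \<le> x * 2 ^ k" .
  moreover have "x * 2 ^ k \<le> real m + 1"
  proof (cases "nat \<lfloor>x * 2 ^ k\<rfloor> \<le> 2 ^ k - 1")
    case True
    then show ?thesis
      using x by (simp add: m_def)
  next
    case False
    then have "real m + 1 = 2 ^ k"
      by (simp add: m_def of_nat_diff)
    then show ?thesis
      using x by simp
  qed
  ultimately have "\<xi> \<le> x" "x \<le> \<xi> + 1 / 2 ^ k"
    by (simp_all add: \<xi>_def field_simps)
  moreover have "real (m + 1) \<le> real (2 ^ k)"
    using \<open>m < 2 ^ k\<close> by (intro of_nat_mono) simp
  then have "\<xi> + 1 / 2 ^ k \<le> 1"
    by (simp add: \<xi>_def field_simps)
  moreover have "0 \<le> \<xi>"
    by (simp add: \<xi>_def)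
  ultimately have "{\<xi> ..< \<xi> + 1 / 2 ^ k} \<subseteq> U"
    using \<open>1 / 2 ^ k < e\<close> by (auto intro!: e simp: dist_real_def)
  then show ?thesis
    using that[of "bits k m"] \<open>m < 2 ^ k\<close> by (simp add: dyadic_bits \<xi>_def)
qed

section \<open>Density bounds\<close>

lemma emeasure_le_of_RN_deriv_le:
  assumes "absolutely_continuous lborel \<mu>" "sets \<mu> = sets borel"
    and "AE x in lborel. x \<in> U \<longrightarrow> RN_deriv lborel \<mu> x \<le> ennreal C"
    and "I \<in> sets borel" "I \<subseteq> U"
  shows "emeasure \<mu> I \<le> ennreal C * emeasure lborel I"
proof -
  have "density lborel (RN_deriv lborel \<mu>) = \<mu>"
    using assms(1,2) by (intro sigma_finite_measure.density_RN_deriv sigma_finite_lborel) simp_all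
  then have "emeasure \<mu> I = (\<integral>\<^sup>+x. RN_deriv lborel \<mu> x * indicator I x \<partial>lborel)"
    using assms(4) by (metis emeasure_density borel_measurable_RN_deriv sets_lborel)
  also have "\<dots> \<le> (\<integral>\<^sup>+x. ennreal C * indicator I x \<partial>lborel)"
    using assms(3) by (intro nn_integral_mono_AE) (auto elim!: eventually_mono
        simp: indicator_def dest: subsetD[OF assms(5)])
  also have "\<dots> = ennreal C * emeasure lborel I"
    using assms(4) by (intro nn_integral_cmult_indicator) simp
  finally show ?thesis .
qed

lemma adj_norm_append_zeros_ge:
  assumes "\<And>k. cnj (a k) = a k"
  shows "cmod (poly (cascade_poly a w) 0) * cmod (a 0) ^ n \<le> adj_norm a (w @ replicate n False)"
  using norm_poly_cascade_poly_0_le_adj_norm[of a "w @ replicate n False", OF assms]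
  by (simp add: poly_cascade_poly_0 norm_mult norm_power)

lemma adj_norm_sq_le_of_RN_deriv_le:
  assumes "is_mu0 a \<mu>" "absolutely_continuous lborel \<mu>"
    and "AE x in lborel. x \<in> U \<longrightarrow> RN_deriv lborel \<mu> x \<le> ennreal C" "0 \<le> C"
    and "{dyadic w ..< dyadic w + 1 / 2 ^ length w} \<subseteq> U"
  shows "(adj_norm a w)\<^sup>2 \<le> C / 2 ^ length w"
proof -
  have "ennreal ((adj_norm a w)\<^sup>2) = emeasure \<mu> {dyadic w ..< dyadic w + 1 / 2 ^ length w}"
    using assms(1) by (simp add: is_mu0_def)
  also have "\<dots> \<le> ennreal C * emeasure lborel {dyadic w ..< dyadic w + 1 / 2 ^ length w}"
    using assms(1) by (intro emeasure_le_of_RN_deriv_le[OF assms(2) _ assms(3) _ assms(5)])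
      (simp_all add: is_mu0_def)
  also have "\<dots> = ennreal (C / 2 ^ length w)"
    using assms(4) by (simp add: ennreal_mult[symmetric])
  finally show ?thesis
    using assms(4) by (simp add: ennreal_le_iff)
qed

theorem RN_deriv_mu0_not_ess_bounded:
  assumes real: "\<And>k. cnj (a k) = a k" and a0: "1 < 2 * (cmod (a 0))\<^sup>2" and "a 3 \<noteq> 0"
    and \<mu>: "is_mu0 a \<mu>" "absolutely_continuous lborel \<mu>"
    and U: "openin (top_of_set {0..1}) U" "U \<noteq> {}"
  shows "\<not> (\<exists>C. AE x in lborel. x \<in> U \<longrightarrow> RN_deriv lborel \<mu> x \<le> ennreal C)"
proof
  assume "\<exists>C. AE x in lborel. x \<in> U \<longrightarrow> RN_deriv lborel \<mu> x \<le> ennreal C"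
  then obtain C0 where "AE x in lborel. x \<in> U \<longrightarrow> RN_deriv lborel \<mu> x \<le> ennreal C0" ..
  define C where "C = max C0 0"
  then have "0 \<le> C"
    by simp
  have C: "AE x in lborel. x \<in> U \<longrightarrow> RN_deriv lborel \<mu> x \<le> ennreal C"
    using \<open>AE x in lborel. _\<close> by eventually_elim (auto simp: C_def intro: order_trans ennreal_leI)
  obtain w where w: "{dyadic w ..< dyadic w + 1 / 2 ^ length w} \<subseteq> U"
    using openin_obtains_dyadic_interval[OF U] .
  define K where "K = cmod (poly (cascade_poly a w) 0)"
  have "K > 0"
    using a0 \<open>a 3 \<noteq> 0\<close> by (auto simp: K_def poly_cascade_poly_0 prod_list_zero_iff)
  have "(K * cmod (a 0) ^ n)\<^sup>2 \<le> C / 2 ^ (length w + n)" for n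
  proof -
    have "1 / 2 ^ (length w + n) \<le> (1 / 2 ^ length w :: real)"
      by (intro divide_left_mono power_increasing) auto
    then have interval: "{dyadic (w @ replicate n False) ..< dyadic (w @ replicate n False)
        + 1 / 2 ^ length (w @ replicate n False)} \<subseteq> U"
      using w by (auto simp: dyadic_append_replicate_False)
    have "(adj_norm a (w @ replicate n False))\<^sup>2 \<le> C / 2 ^ (length w + n)"
      using adj_norm_sq_le_of_RN_deriv_le[OF \<mu> C \<open>0 \<le> C\<close> interval] by simp
    moreover have "(K * cmod (a 0) ^ n)\<^sup>2 \<le> (adj_norm a (w @ replicate n False))\<^sup>2"
      using adj_norm_append_zeros_ge[of a w n, OF real] \<open>K > 0\<close>
      by (intro power_mono) (simp_all add: K_def)
    ultimately show ?thesis
      by linarith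
  qed
  moreover have "(K * cmod (a 0) ^ n)\<^sup>2 * 2 ^ (length w + n)
      = (2 * (cmod (a 0))\<^sup>2) ^ n * (K\<^sup>2 * 2 ^ length w)" for n
    by (simp add: power_mult_distrib power_add flip: power_mult) (simp add: mult_ac)
  ultimately have "(2 * (cmod (a 0))\<^sup>2) ^ n \<le> C / (K\<^sup>2 * 2 ^ length w)" for n
    using \<open>K > 0\<close> by (simp add: pos_le_divide_eq)
  then show False
    using real_arch_pow[OF a0] by (meson not_le)
qed

section \<open>The coefficients \<open>a\<^sub>\<beta>\<close>\<close>

lemma coeffs_beta_real: "cnj (coeffs_beta \<beta> k) = coeffs_beta \<beta> k"
  by (simp add: coeffs_beta_def)

lemma coeffs_beta_0_gt:
  assumes "\<bar>\<beta>\<bar> < pi / 4"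
  shows "1 < 2 * (cmod (coeffs_beta \<beta> 0))\<^sup>2"
proof -
  have "cos (pi / 4) < cos \<bar>\<beta>\<bar>"
    using assms by (intro cos_monotone_0_pi) auto
  then have "sqrt 2 * (sqrt 2 / 2) < sqrt 2 * cos \<beta>"
    by (intro mult_strict_left_mono) (simp_all add: cos_45)
  then have "1 < sqrt 2 * cos \<beta>"
    by simp
  then have "1 / sqrt 2 < (1 + sqrt 2 * cos \<beta>) / (2 * sqrt 2)"
    by (simp add: field_simps)
  then have "(1 / sqrt 2)\<^sup>2 < ((1 + sqrt 2 * cos \<beta>) / (2 * sqrt 2))\<^sup>2"
    by (intro power_strict_mono) auto
  moreover have "cmod (coeffs_beta \<beta> 0) = \<bar>(1 + sqrt 2 * cos \<beta>) / (2 * sqrt 2)\<bar>"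
    unfolding coeffs_beta_def norm_of_real by simp
  ultimately show ?thesis
    by (simp add: power_divide)
qed

lemma coeffs_beta_3_nonzero:
  assumes "\<bar>\<beta>\<bar> < pi / 4"
  shows "coeffs_beta \<beta> 3 \<noteq> 0"
proof -
  have "sin \<beta> < sin (pi / 4)"
    using assms by (intro sin_monotone_2pi) auto
  then have "sqrt 2 * sin \<beta> < sqrt 2 * (sqrt 2 / 2)"
    by (intro mult_strict_left_mono) (simp_all add: sin_45)
  then have "sqrt 2 * sin \<beta> < 1"
    by simp
  then show ?thesis
    unfolding coeffs_beta_def of_real_eq_0_iff by simp
qed

theorem corollary3p13:
  fixes \<beta> :: real and \<mu> :: "real measure"
  assumes "\<bar>\<beta>\<bar> < pi / 4"
    and "is_mu0 (coeffs_beta \<beta>) \<mu>"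
    and "absolutely_continuous lborel \<mu>"
  shows "\<forall>U. openin (top_of_set {0..1::real}) U \<and> U \<noteq> {} \<longrightarrow>
           \<not> (\<exists>C::real. AE x in lborel. x \<in> U \<longrightarrow> RN_deriv lborel \<mu> x \<le> ennreal C)"
  using RN_deriv_mu0_not_ess_bounded[OF coeffs_beta_real coeffs_beta_0_gt[OF assms(1)]
      coeffs_beta_3_nonzero[OF assms(1)] assms(2,3)]
  by blast

end
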